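(* Let $s\in(0,1)$, $\Omega\subset\mathbb{R}^d$ open and bounded, and let $\mu$ be a measure on $S^{d-1}$ having a density with respect to the surface measure $\sigma$ on $S^{d-1}$ that is bounded from below and from above by positive constants. Then $L^1(\mathbb{R}^d,\nu^\star(x)\,dx)=L^1(\mathbb{R}^d,(1+|x|)^{-d-2s}\,dx)$.
   Context: $\nu^\star(x)=\int_{\mathbb{R}}\int_{S^{d-1}}\mathbf{1}_\Omega(x+r\theta)(1+|r|)^{-1-2s}\,\mu(d\theta)\,dr$. *)

theory Defs
  imports "HOL-Analysis.Analysis"
begin

text \<open>Surface measure on the unit sphere S^{d-1} of a Euclidean space of dimension
  d = DIM('a), defined via the cone construction:
  sigma(A) = d * lambda({x. 0 < norm x < 1, x / norm x in A}).\<close>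
definition sphere_surface_measure :: "'a::euclidean_space measure" where
  "sphere_surface_measure =
     scale_measure (of_nat DIM('a))
       (distr (restrict_space lborel (ball 0 1 - {0}))
              (restrict_space borel (sphere 0 1))
              (\<lambda>x. (1 / norm x) *\<^sub>R x))"

definition nu_star :: "'a::euclidean_space set \<Rightarrow> real \<Rightarrow> 'a measure \<Rightarrow> 'a \<Rightarrow> ennreal" where
  "nu_star \<Omega> s M x =
     nn_integral (lborel :: real measure) (\<lambda>r.
        nn_integral M (\<lambda>\<theta>. indicator \<Omega> (x + r *\<^sub>R \<theta>) * ennreal ((1 + \<bar>r\<bar>) powr (- 1 - 2 * s))))"

end

theory Submission
  imports Defs
begin

(* Integrating over all lines through a point is polar coordinates counted twice:
   int_R int_S psi(r theta) dsigma(theta) dr = 2 int psi(z) |z|^(1-d) dz.  As the density of mu lies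
   between c and C, nu*(x) is therefore comparable to int_Omega K(|z - x|) dz with
   K(rho) = 2 rho^(1-d) (1 + rho)^(-1-2s), a decreasing function.  If Omega lies in the ball of
   radius R >= 1, then |z - x| <= R (1 + |x|) on Omega, giving nu*(x) >= k (1 + |x|)^(-d-2s)
   with k > 0 because Omega is open and nonempty; for |x| >= 2R also |z - x| >= (1 + |x|) / 4,
   giving the matching upper bound, while for |x| < 2R the trivial bound
   nu*(x) <= ||(1 + |r|)^(-1-2s)||_1 sigma(S^(d-1)) suffices.  Densities comparable up to
   constants define the same L^1 space. *)

lemma space_sphere_surface_measure [simp]:
  "space (sphere_surface_measure :: 'a::euclidean_space measure) = sphere 0 1"
  unfolding sphere_surface_measure_def by (simp add: space_scale_measure space_restrict_space)

lemma sets_sphere_surface_measure: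
  "sets (sphere_surface_measure :: 'a::euclidean_space measure)
    = sets (restrict_space borel (sphere 0 1))"
  unfolding sphere_surface_measure_def by simp

lemma measurable_sphere_surface_measure_id:
  "(\<lambda>\<theta>. \<theta>) \<in> (sphere_surface_measure :: 'a::euclidean_space measure) \<rightarrow>\<^sub>M borel"
  unfolding measurable_cong_sets[OF sets_sphere_surface_measure refl]
  by (rule measurable_restrict_space1) simp

lemma nn_integral_sphere_surface_measure:
  fixes h :: "'a::euclidean_space \<Rightarrow> ennreal"
  assumes [measurable]: "h \<in> borel_measurable borel"
  shows "(\<integral>\<^sup>+\<theta>. h \<theta> \<partial>sphere_surface_measure) =
     of_nat DIM('a) * (\<integral>\<^sup>+y. indicator (ball 0 1 - {0}) y * h ((1 / norm y) *\<^sub>R y) \<partial>lborel)"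
proof -
  have [measurable]: "(\<lambda>x::'a. (1 / norm x) *\<^sub>R x) \<in>
      restrict_space lborel (ball 0 1 - {0}) \<rightarrow>\<^sub>M restrict_space borel (sphere 0 1)"
    by (rule measurable_restrict_space3) (auto intro: measurable_restrict_space1)
  have [measurable]: "h \<in> borel_measurable (restrict_space borel (sphere 0 1))"
    by (rule measurable_restrict_space1) simp
  show ?thesis
    unfolding sphere_surface_measure_def
    by (simp add: nn_integral_scale_measure nn_integral_distr nn_integral_restrict_space
        measurable_distr_eq1 mult.commute)
qed

lemma finite_measure_sphere_surface_measure:
  "finite_measure (sphere_surface_measure :: 'a::euclidean_space measure)"
proof (rule finite_measureI)
  have "emeasure (sphere_surface_measure :: 'a measure) (space sphere_surface_measure)
      = (\<integral>\<^sup>+\<theta>. 1 \<partial>(sphere_surface_measure :: 'a measure))"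
    by simp
  also have "\<dots> = of_nat DIM('a) * emeasure lborel (ball (0::'a) 1 - {0})"
    by (subst nn_integral_sphere_surface_measure) simp_all
  also have "\<dots> \<le> of_nat DIM('a) * emeasure lborel (ball (0::'a) 1)"
    by (intro mult_left_mono emeasure_mono) auto
  also have "\<dots> < \<infinity>"
    using emeasure_lborel_ball_finite[of "0::'a" 1]
    by (simp add: ennreal_mult_less_top ennreal_of_nat_eq_real_of_nat)
  finally show "emeasure (sphere_surface_measure :: 'a measure) (space sphere_surface_measure) \<noteq> \<infinity>"
    by simp
qed

lemma nn_integral_powr_tail:
  fixes a e :: real
  assumes "e < -1" "0 < a"
  shows "(\<integral>\<^sup>+t. ennreal (if a < t then t powr e else 0) \<partial>lborel)
    = ennreal (- (a powr (e + 1)) / (e + 1))"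
proof -
  have "((\<lambda>t. t powr e) has_integral - (a powr (e + 1)) / (e + 1)) {a..}"
    by (rule has_integral_powr_to_inf[OF assms])
  then have "((\<lambda>t. t powr e) has_integral - (a powr (e + 1)) / (e + 1)) {a<..}"
    by (subst has_integral_spike_set_eq[where T="{a..}"]) (auto intro: negligible_subset[of "{a}"])
  then have "((\<lambda>t. if a < t then t powr e else 0) has_integral - (a powr (e + 1)) / (e + 1)) UNIV"
    using has_integral_restrict_UNIV[of "{a<..}" "\<lambda>t. t powr e"] by simp
  then show ?thesis
    by (rule nn_integral_has_integral_lborel[rotated 2]) auto
qed

lemma nn_integral_abs_powr_tail:
  fixes a e :: real
  assumes "e < -1" "0 < a"
  shows "(\<integral>\<^sup>+t. ennreal (if a < \<bar>t\<bar> then \<bar>t\<bar> powr e else 0) \<partial>lborel)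
    = ennreal (2 * (- (a powr (e + 1)) / (e + 1)))"
proof -
  let ?f = "\<lambda>t::real. ennreal (if a < t then t powr e else 0)"
  have "(\<integral>\<^sup>+t. ennreal (if a < \<bar>t\<bar> then \<bar>t\<bar> powr e else 0) \<partial>lborel)
      = (\<integral>\<^sup>+t. ?f t + ?f (- t) \<partial>lborel)"
    using assms by (intro nn_integral_cong) auto
  also have "\<dots> = (\<integral>\<^sup>+t. ?f t \<partial>lborel) + (\<integral>\<^sup>+t. ?f (- t) \<partial>lborel)"
    by (rule nn_integral_add) simp_all
  also have "(\<integral>\<^sup>+t. ?f (- t) \<partial>lborel) = (\<integral>\<^sup>+t. ?f t \<partial>lborel)"
    by (subst (2) lborel_distr_uminus[symmetric]) (simp add: nn_integral_distr)
  also have "(\<integral>\<^sup>+t. ?f t \<partial>lborel) + (\<integral>\<^sup>+t. ?f t \<partial>lborel)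
      = ennreal (2 * (- (a powr (e + 1)) / (e + 1)))"
  proof -
    have "0 \<le> - (a powr (e + 1)) / (e + 1)"
      using assms by (simp add: divide_nonneg_neg)
    then show ?thesis
      using assms by (simp add: nn_integral_powr_tail ennreal_plus[symmetric] del: ennreal_plus)
  qed
  finally show ?thesis .
qed

lemma nn_integral_lborel_affine:
  fixes f :: "'a::euclidean_space \<Rightarrow> ennreal"
  assumes [measurable]: "f \<in> borel_measurable borel" and "c \<noteq> 0"
  shows "(\<integral>\<^sup>+x. f x \<partial>lborel) = (\<integral>\<^sup>+x. ennreal (\<bar>c\<bar> ^ DIM('a)) * f (t + c *\<^sub>R x) \<partial>lborel)"
  by (subst lborel_affine[OF \<open>c \<noteq> 0\<close>, of t]) (simp add: nn_integral_density nn_integral_distr)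

definition dilation_weight :: "nat \<Rightarrow> real \<Rightarrow> 'a::real_normed_vector \<Rightarrow> real" where
  "dilation_weight d t z = (if z \<noteq> 0 \<and> norm z < \<bar>t\<bar> then norm z * \<bar>t\<bar> powr (- real d - 1) else 0)"

lemma measurable_dilation_weight [measurable (raw)]:
  assumes [measurable]: "f \<in> borel_measurable M" "g \<in> borel_measurable M"
  shows "(\<lambda>x. dilation_weight d (f x) (g x)) \<in> borel_measurable M"
  unfolding dilation_weight_def by measurable

lemma nn_integral_punctured_ball_dilation:
  fixes \<psi> :: "'a::euclidean_space \<Rightarrow> ennreal"
  assumes [measurable]: "\<psi> \<in> borel_measurable borel" and t: "t \<noteq> 0"
  shows "(\<integral>\<^sup>+y. indicator (ball 0 1 - {0}) y * ennreal (norm y) * \<psi> (t *\<^sub>R y) \<partial>lborel)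
    = (\<integral>\<^sup>+z. ennreal (dilation_weight DIM('a) t z) * \<psi> z \<partial>lborel)"
proof -
  have jacobian: "\<bar>1 / t\<bar> ^ DIM('a) * (norm z / \<bar>t\<bar>) = norm z * \<bar>t\<bar> powr (- real DIM('a) - 1)"
    for z :: 'a
    using t by (simp add: powr_diff powr_minus powr_realpow power_one_over field_simps)
  have [measurable]: "ball (0::'a) 1 - {0} \<in> sets borel"
    by simp
  have integrand_measurable:
    "(\<lambda>y. indicator (ball 0 1 - {0}) y * ennreal (norm y) * \<psi> (t *\<^sub>R y)) \<in> borel_measurable borel"
    by measurable
  have "(\<integral>\<^sup>+y. indicator (ball 0 1 - {0}) y * ennreal (norm y) * \<psi> (t *\<^sub>R y) \<partial>lborel)
      = (\<integral>\<^sup>+z. ennreal (\<bar>1 / t\<bar> ^ DIM('a)) * (indicator (ball 0 1 - {0}) ((1 / t) *\<^sub>R z)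
          * ennreal (norm ((1 / t) *\<^sub>R z)) * \<psi> (t *\<^sub>R (1 / t) *\<^sub>R z)) \<partial>lborel)"
    using t by (subst nn_integral_lborel_affine[where c="1 / t" and t=0])
      (simp_all add: integrand_measurable)
  also have "\<dots> = (\<integral>\<^sup>+z. ennreal (dilation_weight DIM('a) t z) * \<psi> z \<partial>lborel)"
  proof (rule nn_integral_cong)
    fix z :: 'a
    have "(1 / t) *\<^sub>R z \<in> ball 0 1 - {0} \<longleftrightarrow> z \<noteq> 0 \<and> norm z < \<bar>t\<bar>"
      using t by (auto simp: divide_less_eq)
    then show "ennreal (\<bar>1 / t\<bar> ^ DIM('a)) * (indicator (ball 0 1 - {0}) ((1 / t) *\<^sub>R z)
          * ennreal (norm ((1 / t) *\<^sub>R z)) * \<psi> (t *\<^sub>R (1 / t) *\<^sub>R z))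
        = ennreal (dilation_weight DIM('a) t z) * \<psi> z"
      using t
      by (simp add: dilation_weight_def indicator_def jacobian[symmetric] ennreal_mult[symmetric]
          mult_ac)
  qed
  finally show ?thesis .
qed

lemma nn_integral_dilation_weight:
  fixes z :: "'a::real_normed_vector"
  assumes "1 \<le> d"
  shows "of_nat d * (\<integral>\<^sup>+t. ennreal (dilation_weight d t z) \<partial>lborel)
    = ennreal (2 * norm z powr (1 - real d))"
proof (cases "z = 0")
  case False
  define a where "a = norm z"
  have a: "0 < a"
    using False by (simp add: a_def)
  have "(\<integral>\<^sup>+t. ennreal (dilation_weight d t z) \<partial>lborel)
      = (\<integral>\<^sup>+t. ennreal a * ennreal (if a < \<bar>t\<bar> then \<bar>t\<bar> powr (- real d - 1) else 0) \<partial>lborel)"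
    using False a
    by (intro nn_integral_cong) (simp add: a_def dilation_weight_def ennreal_mult[symmetric])
  also have "\<dots> = ennreal a * ennreal (2 * (- (a powr (- real d - 1 + 1)) / (- real d - 1 + 1)))"
    using a assms by (simp add: nn_integral_cmult nn_integral_abs_powr_tail)
  also have "\<dots> = ennreal (2 * a powr (1 - real d) / real d)"
    using a assms by (simp add: ennreal_mult[symmetric] powr_diff powr_minus divide_simps)
  finally show ?thesis
    using assms by (simp add: a_def ennreal_of_nat_eq_real_of_nat ennreal_mult[symmetric])
qed (simp add: dilation_weight_def)

lemma nn_integral_lines_sphere_surface_measure:
  fixes \<psi> :: "'a::euclidean_space \<Rightarrow> ennreal"
  assumes [measurable]: "\<psi> \<in> borel_measurable borel"
  shows "(\<integral>\<^sup>+r. \<integral>\<^sup>+\<theta>. \<psi> (r *\<^sub>R \<theta>) \<partial>sphere_surface_measure \<partial>lborel)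
    = (\<integral>\<^sup>+z. ennreal (2 * norm z powr (1 - real DIM('a))) * \<psi> z \<partial>lborel)"
proof -
  define B where "B = ball (0::'a) 1 - {0}"
  have [measurable]: "B \<in> sets borel"
    unfolding B_def by simp
  have lr: "pair_sigma_finite (lborel :: real measure) (lborel :: 'a measure)"
    by (simp add: pair_sigma_finite_def lborel.sigma_finite_measure_axioms)
  have radial: "(\<integral>\<^sup>+r. indicator B y * \<psi> (r *\<^sub>R (1 / norm y) *\<^sub>R y) \<partial>lborel)
      = (\<integral>\<^sup>+t. indicator B y * ennreal (norm y) * \<psi> (t *\<^sub>R y) \<partial>lborel)" for y
  proof (cases "y \<in> B")
    case True
    then have "norm y \<noteq> 0"
      by (simp add: B_def)
    then show ?thesis
      using True
      by (subst nn_integral_real_affine[where c="norm y" and t=0]) (simp_all add: nn_integral_cmult)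
  qed simp
  \<comment> \<open>cone formula for sigma, then r = |y| t, then y = z / t\<close>
  have "(\<integral>\<^sup>+r. \<integral>\<^sup>+\<theta>. \<psi> (r *\<^sub>R \<theta>) \<partial>sphere_surface_measure \<partial>lborel)
      = (\<integral>\<^sup>+r. of_nat DIM('a)
          * (\<integral>\<^sup>+y. indicator B y * \<psi> (r *\<^sub>R (1 / norm y) *\<^sub>R y) \<partial>lborel) \<partial>lborel)"
    unfolding B_def by (intro nn_integral_cong nn_integral_sphere_surface_measure) simp
  also have "\<dots> = of_nat DIM('a)
      * (\<integral>\<^sup>+r. \<integral>\<^sup>+y. indicator B y * \<psi> (r *\<^sub>R (1 / norm y) *\<^sub>R y) \<partial>lborel \<partial>lborel)"
    by (rule nn_integral_cmult) measurable
  also have "(\<integral>\<^sup>+r. \<integral>\<^sup>+y. indicator B y * \<psi> (r *\<^sub>R (1 / norm y) *\<^sub>R y) \<partial>lborel \<partial>lborel)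
      = (\<integral>\<^sup>+y. \<integral>\<^sup>+r. indicator B y * \<psi> (r *\<^sub>R (1 / norm y) *\<^sub>R y) \<partial>lborel \<partial>lborel)"
    by (rule pair_sigma_finite.Fubini'[OF lr, symmetric]) measurable
  also have "\<dots> = (\<integral>\<^sup>+y. \<integral>\<^sup>+t. indicator B y * ennreal (norm y) * \<psi> (t *\<^sub>R y) \<partial>lborel \<partial>lborel)"
    by (rule nn_integral_cong) (rule radial)
  also have "\<dots> = (\<integral>\<^sup>+t. \<integral>\<^sup>+y. indicator B y * ennreal (norm y) * \<psi> (t *\<^sub>R y) \<partial>lborel \<partial>lborel)"
    by (rule pair_sigma_finite.Fubini'[OF lr]) measurable
  also have "\<dots> = (\<integral>\<^sup>+t. \<integral>\<^sup>+z. ennreal (dilation_weight DIM('a) t z) * \<psi> z \<partial>lborel \<partial>lborel)"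
    by (rule nn_integral_cong_AE, rule AE_mp[OF AE_lborel_singleton[of 0]], rule AE_I2)
      (simp add: B_def nn_integral_punctured_ball_dilation)
  also have "\<dots> = (\<integral>\<^sup>+z. \<integral>\<^sup>+t. ennreal (dilation_weight DIM('a) t z) * \<psi> z \<partial>lborel \<partial>lborel)"
    by (rule pair_sigma_finite.Fubini'[OF lr, symmetric]) measurable
  also have "of_nat DIM('a) * \<dots>
      = (\<integral>\<^sup>+z. of_nat DIM('a) * (\<integral>\<^sup>+t. ennreal (dilation_weight DIM('a) t z) \<partial>lborel)
          * \<psi> z \<partial>lborel)"
    by (subst nn_integral_cmult[symmetric], measurable)
      (simp add: nn_integral_multc measurable_dilation_weight mult.assoc)
  also have "\<dots> = (\<integral>\<^sup>+z. ennreal (2 * norm z powr (1 - real DIM('a))) * \<psi> z \<partial>lborel)"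
    by (simp add: DIM_positive Suc_le_eq nn_integral_dilation_weight)
  finally show ?thesis .
qed

definition line_kernel :: "nat \<Rightarrow> real \<Rightarrow> real \<Rightarrow> real" where
  "line_kernel d s \<rho> = 2 * \<rho> powr (1 - real d) * (1 + \<rho>) powr (- 1 - 2 * s)"

lemma nu_star_sphere_surface_measure_eq:
  fixes \<Omega> :: "'a::euclidean_space set"
  assumes [measurable]: "\<Omega> \<in> sets borel"
  shows "nu_star \<Omega> s sphere_surface_measure x
    = (\<integral>\<^sup>+z. indicator \<Omega> z * ennreal (line_kernel DIM('a) s (norm (z - x))) \<partial>lborel)"
proof -
  define \<psi> where "\<psi> z = indicator \<Omega> (x + z) * ennreal ((1 + norm z) powr (- 1 - 2 * s))" for z :: 'a
  have [measurable]: "\<psi> \<in> borel_measurable borel"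
    unfolding \<psi>_def by measurable
  have "nu_star \<Omega> s sphere_surface_measure x
      = (\<integral>\<^sup>+r. \<integral>\<^sup>+\<theta>. \<psi> (r *\<^sub>R \<theta>) \<partial>sphere_surface_measure \<partial>lborel)"
    unfolding nu_star_def \<psi>_def by (intro nn_integral_cong) simp
  also have "\<dots> = (\<integral>\<^sup>+z. ennreal (2 * norm z powr (1 - real DIM('a))) * \<psi> z \<partial>lborel)"
    by (rule nn_integral_lines_sphere_surface_measure) simp
  also have "\<dots> = (\<integral>\<^sup>+z. indicator \<Omega> (x + z)
      * ennreal (line_kernel DIM('a) s (norm (x + z - x))) \<partial>lborel)"
    by (intro nn_integral_cong) (simp add: \<psi>_def line_kernel_def ennreal_mult[symmetric] mult_ac)
  also have "\<dots> = (\<integral>\<^sup>+z. indicator \<Omega> z * ennreal (line_kernel DIM('a) s (norm (z - x))) \<partial>lborel)"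
    using nn_integral_lborel_affine[where c=1 and t=x,
        of "\<lambda>z. indicator \<Omega> z * ennreal (line_kernel DIM('a) s (norm (z - x)))"]
    by (simp add: line_kernel_def)
  finally show ?thesis .
qed

lemma line_kernel_lower_bound:
  assumes R: "1 \<le> R" and X: "1 \<le> X" and \<rho>: "0 < \<rho>" "\<rho> \<le> R * X" and d: "1 \<le> d" and s: "0 < s"
  shows "2 * R powr (1 - real d) * (2 * R) powr (- 1 - 2 * s) * X powr (- real d - 2 * s)
    \<le> line_kernel d s \<rho>"
proof -
  have "1 \<le> R * X"
    using R X by (metis mult_mono' mult_1 zero_le_one order_trans)
  then have "1 + \<rho> \<le> 2 * R * X"
    using \<rho> by simp
  have "2 * R powr (1 - real d) * (2 * R) powr (- 1 - 2 * s) * X powr (- real d - 2 * s)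
      = 2 * (R * X) powr (1 - real d) * (2 * R * X) powr (- 1 - 2 * s)"
    using R X by (simp add: powr_mult powr_add[symmetric] mult_ac)
  also have "\<dots> \<le> 2 * \<rho> powr (1 - real d) * (1 + \<rho>) powr (- 1 - 2 * s)"
    using \<rho> d s \<open>1 + \<rho> \<le> 2 * R * X\<close> by (intro mult_mono powr_mono2') auto
  finally show ?thesis
    unfolding line_kernel_def .
qed

lemma line_kernel_upper_bound:
  assumes X: "0 < X" "X \<le> 4 * \<rho>" and d: "1 \<le> d" and s: "0 < s"
  shows "line_kernel d s \<rho> \<le> 2 * 4 powr (real d + 2 * s) * X powr (- real d - 2 * s)"
proof -
  have "line_kernel d s \<rho> \<le> 2 * (X / 4) powr (1 - real d) * (X / 4) powr (- 1 - 2 * s)"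
    unfolding line_kernel_def using X d s by (intro mult_mono mult_left_mono powr_mono2') auto
  also have "\<dots> = 2 * 4 powr (real d + 2 * s) * X powr (- real d - 2 * s)"
    by (simp add: powr_add[symmetric] powr_divide powr_minus_divide divide_simps)
  finally show ?thesis .
qed

lemma nn_integral_one_plus_abs_powr_finite:
  fixes e :: real
  assumes "e < -1"
  shows "(\<integral>\<^sup>+r. ennreal ((1 + \<bar>r\<bar>) powr e) \<partial>lborel) < \<infinity>"
proof -
  have "(\<integral>\<^sup>+r. ennreal ((1 + \<bar>r\<bar>) powr e) \<partial>lborel)
      \<le> (\<integral>\<^sup>+r. indicator {-1..1} r + ennreal (if 1 < \<bar>r\<bar> then \<bar>r\<bar> powr e else 0) \<partial>lborel)"
  proof (rule nn_integral_mono)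
    fix r :: real
    have "(1 + \<bar>r\<bar>) powr e \<le> (if 1 < \<bar>r\<bar> then \<bar>r\<bar> powr e else 1)"
      using assms powr_mono2'[of e 1 "1 + \<bar>r\<bar>"] powr_mono2'[of e "\<bar>r\<bar>" "1 + \<bar>r\<bar>"] by auto
    then show "ennreal ((1 + \<bar>r\<bar>) powr e)
        \<le> indicator {-1..1} r + ennreal (if 1 < \<bar>r\<bar> then \<bar>r\<bar> powr e else 0)"
      by (auto simp: indicator_def intro: ennreal_leI split: if_splits)
  qed
  also have "\<dots> = emeasure lborel {-1..1::real} + ennreal (2 * (- (1 powr (e + 1)) / (e + 1)))"
    using assms by (simp add: nn_integral_add nn_integral_abs_powr_tail)
  also have "\<dots> < \<infinity>"
    by simp
  finally show ?thesis .
qed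

lemma nu_star_le_mass:
  "nu_star \<Omega> s N x \<le> (\<integral>\<^sup>+r. ennreal ((1 + \<bar>r\<bar>) powr (- 1 - 2 * s)) \<partial>lborel) * emeasure N (space N)"
proof -
  have "nu_star \<Omega> s N x \<le> (\<integral>\<^sup>+r. \<integral>\<^sup>+\<theta>. ennreal ((1 + \<bar>r\<bar>) powr (- 1 - 2 * s)) \<partial>N \<partial>lborel)"
    unfolding nu_star_def by (intro nn_integral_mono) (simp add: indicator_def)
  also have "\<dots> = (\<integral>\<^sup>+r. ennreal ((1 + \<bar>r\<bar>) powr (- 1 - 2 * s)) \<partial>lborel) * emeasure N (space N)"
    by (simp add: nn_integral_multc)
  finally show ?thesis .
qed

lemma emeasure_lborel_open_pos:
  fixes \<Omega> :: "'a::euclidean_space set"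
  assumes "open \<Omega>" "\<Omega> \<noteq> {}"
  shows "0 < emeasure lborel \<Omega>"
proof -
  obtain y e where "0 < e" "ball y e \<subseteq> \<Omega>"
    using assms open_contains_ball by blast
  have "0 < emeasure lborel (ball y e)"
    using content_ball_pos[OF \<open>0 < e\<close>] emeasure_lborel_ball_finite[of y e]
    by (simp add: emeasure_eq_ennreal_measure)
  also have "\<dots> \<le> emeasure lborel \<Omega>"
    using \<open>ball y e \<subseteq> \<Omega>\<close> \<open>open \<Omega>\<close> by (intro emeasure_mono) auto
  finally show ?thesis .
qed

lemma emeasure_lborel_subset_cball:
  fixes \<Omega> :: "'a::euclidean_space set"
  assumes "\<Omega> \<subseteq> cball 0 R"
  shows "emeasure lborel \<Omega> = ennreal (measure lborel \<Omega>)"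
  using emeasure_bounded_finite[OF bounded_subset[OF bounded_cball assms]]
  by (simp add: emeasure_eq_ennreal_measure)

lemma nu_star_sphere_lower_bound:
  fixes \<Omega> :: "'a::euclidean_space set"
  assumes [measurable]: "\<Omega> \<in> sets borel"
    and \<Omega>: "\<Omega> \<subseteq> cball 0 R" and R: "1 \<le> R" and s: "0 < s"
  shows "ennreal (2 * R powr (1 - real DIM('a)) * (2 * R) powr (- 1 - 2 * s) * measure lborel \<Omega>
      * (1 + norm x) powr (- real DIM('a) - 2 * s)) \<le> nu_star \<Omega> s sphere_surface_measure x"
proof -
  define c where "c = 2 * R powr (1 - real DIM('a)) * (2 * R) powr (- 1 - 2 * s)
    * (1 + norm x) powr (- real DIM('a) - 2 * s)"
  have "0 \<le> c"
    unfolding c_def using R by simp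
  have "ennreal (c * measure lborel \<Omega>) = (\<integral>\<^sup>+z. ennreal c * indicator \<Omega> z \<partial>lborel)"
    using \<open>0 \<le> c\<close>
    by (subst nn_integral_cmult_indicator)
      (simp_all add: emeasure_lborel_subset_cball[OF \<Omega>] ennreal_mult)
  also have "\<dots> \<le> (\<integral>\<^sup>+z. indicator \<Omega> z * ennreal (line_kernel DIM('a) s (norm (z - x))) \<partial>lborel)"
  proof (rule nn_integral_mono_AE)
    show "AE z in lborel. ennreal c * indicator \<Omega> z
        \<le> indicator \<Omega> z * ennreal (line_kernel DIM('a) s (norm (z - x)))"
      using AE_lborel_singleton[of x]
    proof eventually_elim
      case (elim z)
      show ?case
      proof (cases "z \<in> \<Omega>")
        case True
        have "norm (z - x) \<le> R * (1 + norm x)"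
          using norm_triangle_ineq4[of z x] \<Omega> True R mult_left_mono[OF R, of "norm x"]
          by (auto simp: algebra_simps)
        then have "c \<le> line_kernel DIM('a) s (norm (z - x))"
          unfolding c_def using elim R s
          by (intro line_kernel_lower_bound) (auto simp: DIM_positive Suc_le_eq)
        then show ?thesis
          using True by (simp add: ennreal_leI)
      qed simp
    qed
  qed
  finally show ?thesis
    by (simp add: nu_star_sphere_surface_measure_eq c_def mult_ac)
qed

lemma nu_star_sphere_far_bound:
  fixes \<Omega> :: "'a::euclidean_space set"
  assumes [measurable]: "\<Omega> \<in> sets borel"
    and \<Omega>: "\<Omega> \<subseteq> cball 0 R" and R: "1 \<le> R" and s: "0 < s" and x: "2 * R \<le> norm x"
  shows "nu_star \<Omega> s sphere_surface_measure x \<le> ennreal (2 * 4 powr (real DIM('a) + 2 * s)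
    * measure lborel \<Omega> * (1 + norm x) powr (- real DIM('a) - 2 * s))"
proof -
  define C where
    "C = 2 * 4 powr (real DIM('a) + 2 * s) * (1 + norm x) powr (- real DIM('a) - 2 * s)"
  have "nu_star \<Omega> s sphere_surface_measure x
      \<le> (\<integral>\<^sup>+z. ennreal C * indicator \<Omega> z \<partial>lborel)"
    unfolding nu_star_sphere_surface_measure_eq[OF assms(1)]
  proof (rule nn_integral_mono)
    fix z
    show "indicator \<Omega> z * ennreal (line_kernel DIM('a) s (norm (z - x)))
        \<le> ennreal C * indicator \<Omega> z"
    proof (cases "z \<in> \<Omega>")
      case True
      have "1 + norm x \<le> 4 * norm (z - x)"
        using norm_triangle_ineq3[of x z] \<Omega> True R x by (auto simp: norm_minus_commute)
      then have "line_kernel DIM('a) s (norm (z - x)) \<le> C"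
        unfolding C_def using s
        by (intro line_kernel_upper_bound) (auto simp: DIM_positive Suc_le_eq add_pos_nonneg)
      then show ?thesis
        using True by (simp add: ennreal_leI)
    qed simp
  qed
  also have "\<dots> = ennreal (C * measure lborel \<Omega>)"
    by (subst nn_integral_cmult_indicator)
      (simp_all add: emeasure_lborel_subset_cball[OF \<Omega>] ennreal_mult C_def)
  finally show ?thesis
    by (simp add: C_def mult_ac)
qed

lemma nu_star_sphere_upper_bound:
  fixes \<Omega> :: "'a::euclidean_space set"
  assumes [measurable]: "\<Omega> \<in> sets borel"
    and \<Omega>: "\<Omega> \<subseteq> cball 0 R" and R: "1 \<le> R" and s: "0 < s"
  obtains K where "0 \<le> K"
    "\<And>x. nu_star \<Omega> s sphere_surface_measure x
      \<le> ennreal (K * (1 + norm x) powr (- real DIM('a) - 2 * s))"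
proof -
  let ?\<sigma> = "sphere_surface_measure :: 'a measure"
  let ?w = "\<lambda>x::'a. (1 + norm x) powr (- real DIM('a) - 2 * s)"
  define B where "B = enn2real ((\<integral>\<^sup>+r. ennreal ((1 + \<bar>r\<bar>) powr (- 1 - 2 * s)) \<partial>lborel)
    * emeasure ?\<sigma> (space ?\<sigma>))"
  have near: "nu_star \<Omega> s ?\<sigma> x \<le> ennreal B" for x
  proof -
    interpret finite_measure ?\<sigma>
      by (rule finite_measure_sphere_surface_measure)
    have "(\<integral>\<^sup>+r. ennreal ((1 + \<bar>r\<bar>) powr (- 1 - 2 * s)) \<partial>lborel) * emeasure ?\<sigma> (space ?\<sigma>) < \<infinity>"
      using s nn_integral_one_plus_abs_powr_finite[of "- 1 - 2 * s"]
      by (simp add: ennreal_mult_eq_top_iff less_top[symmetric])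
    then show ?thesis
      unfolding B_def using nu_star_le_mass[of \<Omega> s ?\<sigma> x] by (simp add: ennreal_enn2real_if)
  qed
  define K where "K = 2 * 4 powr (real DIM('a) + 2 * s) * measure lborel \<Omega>
    + B * (1 + 2 * R) powr (real DIM('a) + 2 * s)"
  show ?thesis
  proof (rule that[of K])
    show "0 \<le> K"
      unfolding K_def B_def by simp
    fix x :: 'a
    show "nu_star \<Omega> s ?\<sigma> x \<le> ennreal (K * ?w x)"
    proof (cases "2 * R \<le> norm x")
      case True
      have "2 * 4 powr (real DIM('a) + 2 * s) * measure lborel \<Omega> * ?w x \<le> K * ?w x"
        unfolding K_def B_def by (intro mult_right_mono) simp_all
      then show ?thesis
        using nu_star_sphere_far_bound[OF assms True] by (meson ennreal_leI order_trans)
    next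
      case False
      have "1 = (1 + 2 * R) powr (real DIM('a) + 2 * s) * (1 + 2 * R) powr (- real DIM('a) - 2 * s)"
        using R by (simp add: powr_add[symmetric])
      also have "\<dots> \<le> (1 + 2 * R) powr (real DIM('a) + 2 * s) * ?w x"
        using False R s by (intro mult_left_mono powr_mono2') (auto intro: add_pos_nonneg)
      finally have "1 \<le> (1 + 2 * R) powr (real DIM('a) + 2 * s) * ?w x" .
      have "0 \<le> B"
        unfolding B_def by simp
      then have "B \<le> B * ((1 + 2 * R) powr (real DIM('a) + 2 * s) * ?w x)"
        using \<open>1 \<le> (1 + 2 * R) powr (real DIM('a) + 2 * s) * ?w x\<close>
        by (simp add: mult_le_cancel_left1)
      also have "\<dots> \<le> K * ?w x"
        using measure_nonneg[of lborel \<Omega>] unfolding K_def by (simp add: algebra_simps)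
      finally have "B \<le> K * ?w x" .
      then show ?thesis
        using near[of x] by (meson ennreal_leI order_trans)
    qed
  qed
qed

lemma nu_star_sphere_comparable:
  fixes \<Omega> :: "'a::euclidean_space set"
  assumes "open \<Omega>" "bounded \<Omega>" "\<Omega> \<noteq> {}" "0 < s"
  obtains k K where "0 < k" "0 \<le> K"
    "\<And>x. ennreal (k * (1 + norm x) powr (- real DIM('a) - 2 * s))
      \<le> nu_star \<Omega> s sphere_surface_measure x"
    "\<And>x. nu_star \<Omega> s sphere_surface_measure x
      \<le> ennreal (K * (1 + norm x) powr (- real DIM('a) - 2 * s))"
proof -
  have \<Omega>_borel: "\<Omega> \<in> sets borel"
    using \<open>open \<Omega>\<close> by simp
  obtain R where R: "\<Omega> \<subseteq> cball 0 R" "1 \<le> R"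
  proof -
    obtain b where "\<forall>z\<in>\<Omega>. norm z \<le> b"
      using \<open>bounded \<Omega>\<close> bounded_iff by blast
    then show ?thesis
      by (intro that[of "max b 1"]) auto
  qed
  define k where "k = 2 * R powr (1 - real DIM('a)) * (2 * R) powr (- 1 - 2 * s) * measure lborel \<Omega>"
  have "0 < k"
    using emeasure_lborel_open_pos[OF \<open>open \<Omega>\<close> \<open>\<Omega> \<noteq> {}\<close>] R
    by (simp add: k_def emeasure_lborel_subset_cball[OF R(1)])
  obtain K where "0 \<le> K"
    "\<And>x. nu_star \<Omega> s sphere_surface_measure x
      \<le> ennreal (K * (1 + norm x) powr (- real DIM('a) - 2 * s))"
    using nu_star_sphere_upper_bound[OF \<Omega>_borel R \<open>0 < s\<close>] by blast
  then show ?thesis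
    using that[OF \<open>0 < k\<close>] nu_star_sphere_lower_bound[OF \<Omega>_borel R \<open>0 < s\<close>]
    unfolding k_def by blast
qed

lemma nu_star_density_bounds:
  fixes N :: "'a::euclidean_space measure"
  assumes "sigma_finite_measure N" and [measurable]: "(\<lambda>\<theta>. \<theta>) \<in> N \<rightarrow>\<^sub>M borel"
    and [measurable]: "\<Omega> \<in> sets borel" "g \<in> borel_measurable N"
    and g: "\<And>\<theta>. \<theta> \<in> space N \<Longrightarrow> c \<le> g \<theta> \<and> g \<theta> \<le> C"
  shows "ennreal c * nu_star \<Omega> s N x \<le> nu_star \<Omega> s (density N (\<lambda>\<theta>. ennreal (g \<theta>))) x"
    and "nu_star \<Omega> s (density N (\<lambda>\<theta>. ennreal (g \<theta>))) x \<le> ennreal C * nu_star \<Omega> s N x"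
proof -
  interpret sigma_finite_measure N
    by (rule assms(1))
  define F where "F r \<theta> = indicator \<Omega> (x + r *\<^sub>R \<theta>) * ennreal ((1 + \<bar>r\<bar>) powr (- 1 - 2 * s))"
    for r :: real and \<theta> :: 'a
  have [measurable]: "case_prod F \<in> borel_measurable (lborel \<Otimes>\<^sub>M N)"
    unfolding F_def by measurable
  have nu_N: "nu_star \<Omega> s N x = (\<integral>\<^sup>+r. \<integral>\<^sup>+\<theta>. F r \<theta> \<partial>N \<partial>lborel)"
    unfolding nu_star_def F_def ..
  have nu_density: "nu_star \<Omega> s (density N (\<lambda>\<theta>. ennreal (g \<theta>))) x
      = (\<integral>\<^sup>+r. \<integral>\<^sup>+\<theta>. ennreal (g \<theta>) * F r \<theta> \<partial>N \<partial>lborel)"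
    unfolding nu_star_def F_def by (intro nn_integral_cong nn_integral_density) simp_all
  have "ennreal c * nu_star \<Omega> s N x = (\<integral>\<^sup>+r. \<integral>\<^sup>+\<theta>. ennreal c * F r \<theta> \<partial>N \<partial>lborel)"
    unfolding nu_N by (simp add: nn_integral_cmult)
  also have "\<dots> \<le> nu_star \<Omega> s (density N (\<lambda>\<theta>. ennreal (g \<theta>))) x"
    unfolding nu_density using g by (intro nn_integral_mono mult_right_mono ennreal_leI) auto
  finally show "ennreal c * nu_star \<Omega> s N x \<le> nu_star \<Omega> s (density N (\<lambda>\<theta>. ennreal (g \<theta>))) x" .
  have "nu_star \<Omega> s (density N (\<lambda>\<theta>. ennreal (g \<theta>))) x \<le> (\<integral>\<^sup>+r. \<integral>\<^sup>+\<theta>. ennreal C * F r \<theta> \<partial>N \<partial>lborel)"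
    unfolding nu_density using g by (intro nn_integral_mono mult_right_mono ennreal_leI) auto
  also have "\<dots> = ennreal C * nu_star \<Omega> s N x"
    unfolding nu_N by (simp add: nn_integral_cmult)
  finally show "nu_star \<Omega> s (density N (\<lambda>\<theta>. ennreal (g \<theta>))) x \<le> ennreal C * nu_star \<Omega> s N x" .
qed

lemma borel_measurable_nu_star_sphere_density:
  fixes g :: "'a::euclidean_space \<Rightarrow> real"
  assumes g: "g \<in> borel_measurable sphere_surface_measure" and [measurable]: "\<Omega> \<in> sets borel"
  shows "nu_star \<Omega> s (density sphere_surface_measure (\<lambda>\<theta>. ennreal (g \<theta>))) \<in> borel_measurable borel"
proof -
  interpret \<sigma>: finite_measure "sphere_surface_measure :: 'a measure"
    by (rule finite_measure_sphere_surface_measure)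
  interpret sigma_finite_measure "density sphere_surface_measure (\<lambda>\<theta>. ennreal (g \<theta>))"
    by (subst \<sigma>.sigma_finite_iff_density_finite) (use g in simp_all)
  have [measurable]: "(\<lambda>\<theta>. \<theta>) \<in> density sphere_surface_measure (\<lambda>\<theta>. ennreal (g \<theta>)) \<rightarrow>\<^sub>M borel"
    using measurable_sphere_surface_measure_id by simp
  show ?thesis
    unfolding nu_star_def[abs_def] by measurable
qed

lemma integrable_density_dominated:
  fixes f :: "'a \<Rightarrow> 'b::{banach, second_countable_topology}"
  assumes [measurable]: "h \<in> borel_measurable M" "k \<in> borel_measurable M"
    and le: "\<And>x. x \<in> space M \<Longrightarrow> h x \<le> ennreal b * k x"
    and f: "integrable (density M k) f"
  shows "integrable (density M h) f"
proof -
  have [measurable]: "f \<in> borel_measurable M"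
    using borel_measurable_integrable[OF f] by simp
  have "(\<integral>\<^sup>+x. h x * ennreal (norm (f x)) \<partial>M) \<le> (\<integral>\<^sup>+x. ennreal b * (k x * ennreal (norm (f x))) \<partial>M)"
    using le by (intro nn_integral_mono) (simp add: mult.assoc[symmetric] mult_right_mono)
  also have "\<dots> = ennreal b * (\<integral>\<^sup>+x. ennreal (norm (f x)) \<partial>density M k)"
    by (simp add: nn_integral_cmult nn_integral_density)
  also have "\<dots> < \<infinity>"
    using f by (simp add: integrable_iff_bounded ennreal_mult_less_top)
  finally show ?thesis
    by (simp add: integrable_iff_bounded nn_integral_density)
qed

lemma integrable_density_iff_comparable:
  fixes f :: "'a \<Rightarrow> 'b::{banach, second_countable_topology}"
  assumes [measurable]: "h \<in> borel_measurable M" "k \<in> borel_measurable M"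
    and "0 < a" and lower: "\<And>x. x \<in> space M \<Longrightarrow> ennreal a * k x \<le> h x"
    and upper: "\<And>x. x \<in> space M \<Longrightarrow> h x \<le> ennreal b * k x"
  shows "integrable (density M h) f \<longleftrightarrow> integrable (density M k) f"
proof
  have "k x \<le> ennreal (1 / a) * h x" if "x \<in> space M" for x
  proof -
    have "k x = ennreal (1 / a) * (ennreal a * k x)"
      using \<open>0 < a\<close> by (simp add: mult.assoc[symmetric] ennreal_mult[symmetric])
    also have "\<dots> \<le> ennreal (1 / a) * h x"
      using lower[OF that] by (rule mult_left_mono) simp
    finally show ?thesis .
  qed
  then show "integrable (density M h) f \<Longrightarrow> integrable (density M k) f"
    by (rule integrable_density_dominated[rotated 2]) simp_all
qed (rule integrable_density_dominated[OF _ _ upper], simp_all)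

theorem lemmaA1:
  fixes s :: real and \<Omega> :: "'a::euclidean_space set" and M :: "'a measure"
    and g :: "'a \<Rightarrow> real" and c C :: real
  assumes "0 < s" "s < 1"
    and "open \<Omega>" "bounded \<Omega>" "\<Omega> \<noteq> {}"
    and "g \<in> borel_measurable sphere_surface_measure"
    and "0 < c" "\<And>\<theta>. \<theta> \<in> sphere 0 1 \<Longrightarrow> c \<le> g \<theta> \<and> g \<theta> \<le> C"
    and "M = density sphere_surface_measure (\<lambda>\<theta>. ennreal (g \<theta>))"
  shows "\<forall>f :: 'a \<Rightarrow> real.
           integrable (density lborel (nu_star \<Omega> s M)) f \<longleftrightarrow>
           integrable (density lborel (\<lambda>x. ennreal ((1 + norm x) powr (- real DIM('a) - 2 * s)))) f"
proof
  fix f :: "'a \<Rightarrow> real"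
  let ?\<sigma> = "sphere_surface_measure :: 'a measure"
  let ?w = "\<lambda>x::'a. (1 + norm x) powr (- real DIM('a) - 2 * s)"
  obtain k K where k: "0 < k" and K: "0 \<le> K"
    and lower: "\<And>x. ennreal (k * ?w x) \<le> nu_star \<Omega> s ?\<sigma> x"
    and upper: "\<And>x. nu_star \<Omega> s ?\<sigma> x \<le> ennreal (K * ?w x)"
    using nu_star_sphere_comparable[OF assms(3-5,1)] by blast
  have \<Omega>_borel: "\<Omega> \<in> sets borel"
    using \<open>open \<Omega>\<close> by simp
  note density_bounds = nu_star_density_bounds[OF
      finite_measure_sphere_surface_measure[THEN finite_measure.axioms(1)]
      measurable_sphere_surface_measure_id \<Omega>_borel assms(6), where s=s, folded assms(9)]
  show "integrable (density lborel (nu_star \<Omega> s M)) f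
    \<longleftrightarrow> integrable (density lborel (\<lambda>x. ennreal (?w x))) f"
  proof (rule integrable_density_iff_comparable[where a="c * k" and b="C * K"])
    show "nu_star \<Omega> s M \<in> borel_measurable lborel"
      unfolding assms(9) using borel_measurable_nu_star_sphere_density[OF assms(6) \<Omega>_borel] by simp
    fix x
    have "ennreal (c * k) * ennreal (?w x) \<le> ennreal c * nu_star \<Omega> s ?\<sigma> x"
      using mult_left_mono[OF lower[of x], of "ennreal c"] \<open>0 < c\<close> k
      by (simp add: ennreal_mult[symmetric] mult.assoc)
    then show "ennreal (c * k) * ennreal (?w x) \<le> nu_star \<Omega> s M x"
      using assms(8) density_bounds(1)[of c C x] by auto
    have "nu_star \<Omega> s M x \<le> ennreal C * ennreal (K * ?w x)"
      using assms(8) order_trans[OF density_bounds(2) mult_left_mono[OF upper]] by auto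
    then show "nu_star \<Omega> s M x \<le> ennreal (C * K) * ennreal (?w x)"
      using K by (simp add: ennreal_mult'' mult.assoc)
  qed (use \<open>0 < c\<close> k in simp_all)
qed

end
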